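(* Let $n\in\mathbb{N}$ and let $R$ be a strongly $n$-torsion clean ring. Then: (1) $R$ is a PI-ring satisfying the polynomial identity $(x^n-1)((x-1)^n-1)=0$, i.e. $(r^n-1)((r-1)^n-1)=0$ for all $r\in R$; (2) $R$ has finite characteristic $\mathrm{char}(R)=|1\cdot\mathbb{Z}|$; (3) $J(R)$ is a nil ideal of index smaller than $(\mathrm{char}(R))^n$; (4) when $n$ is odd, $R$ is a reduced ring of characteristic $2$ and $J(R)=0$; (5) if $R$ is an algebra over a field $F$, then (i) $J(R)$ is a nil ideal of index at most $n$, and (ii) either $R$ is abelian or $\mathrm{char}(F)$ divides $n$.
   Context: All rings are associative with identity. $U(R)$ is the unit group, $J(R)$ the Jacobson radical, and $\mathrm{char}(R):=|1\cdot\mathbb{Z}|$ is the cardinality of the subring generated by $1$. A decomposition $r=e+u$ with $e^2=e$, $u\in U(R)$ and $u^n=1$ is an $n$-torsion clean decomposition of $r$; it is strongly $n$-torsion clean if moreover $eu=ue$. A ring $R$ is strongly $n$-torsion clean if every element of $R$ has a strongly $n$-torsion clean decomposition and $n$ is the smallest natural number with this property. A nil ideal $I$ is nil of index $k$ if $r^k=0$ for all $r\in I$ and $k$ is the minimal natural number with this property. A ring is abelian if all its idempotents are central, and reduced if it has no nonzero nilpotent elements. *)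

theory Defs
  imports Main
begin

definition unit_of :: "'a::ring_1 \<Rightarrow> bool" where
  "unit_of u \<longleftrightarrow> (\<exists>v. u * v = 1 \<and> v * u = 1)"

definition idempotent :: "'a::ring_1 \<Rightarrow> bool" where
  "idempotent e \<longleftrightarrow> e * e = e"

definition has_strong_torsion_clean_decomps :: "nat \<Rightarrow> 'a::ring_1 itself \<Rightarrow> bool" where
  "has_strong_torsion_clean_decomps n TYPE('a) \<longleftrightarrow>
     (\<forall>r::'a. \<exists>e u. idempotent e \<and> unit_of u \<and> u ^ n = 1 \<and> e * u = u * e \<and> r = e + u)"

definition strongly_n_torsion_clean :: "nat \<Rightarrow> 'a::ring_1 itself \<Rightarrow> bool" where
  "strongly_n_torsion_clean n T \<longleftrightarrow>
     1 \<le> n \<and> has_strong_torsion_clean_decomps n T \<and>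
     (\<forall>m. 1 \<le> m \<and> m < n \<longrightarrow> \<not> has_strong_torsion_clean_decomps m T)"

text \<open>char(R) = cardinality of the subring generated by 1 (0 if infinite, as card does).\<close>
definition ring_char :: "'a::ring_1 itself \<Rightarrow> nat" where
  "ring_char TYPE('a) = card (range (of_int :: int \<Rightarrow> 'a))"

definition left_ideal :: "'a::ring_1 set \<Rightarrow> bool" where
  "left_ideal I \<longleftrightarrow> 0 \<in> I \<and> (\<forall>x\<in>I. \<forall>y\<in>I. x + y \<in> I) \<and> (\<forall>x\<in>I. - x \<in> I)
     \<and> (\<forall>r. \<forall>x\<in>I. r * x \<in> I)"

definition two_sided_ideal :: "'a::ring_1 set \<Rightarrow> bool" where
  "two_sided_ideal I \<longleftrightarrow> left_ideal I \<and> (\<forall>r. \<forall>x\<in>I. x * r \<in> I)"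

definition maximal_left_ideal :: "'a::ring_1 set \<Rightarrow> bool" where
  "maximal_left_ideal M \<longleftrightarrow> left_ideal M \<and> M \<noteq> UNIV \<and>
     (\<forall>N. left_ideal N \<and> M \<subseteq> N \<longrightarrow> N = M \<or> N = UNIV)"

definition jacobson :: "'a::ring_1 itself \<Rightarrow> 'a set" where
  "jacobson TYPE('a) = \<Inter> {M :: 'a set. maximal_left_ideal M}"

definition nil_ideal_of_index :: "'a::ring_1 set \<Rightarrow> nat \<Rightarrow> bool" where
  "nil_ideal_of_index I k \<longleftrightarrow> two_sided_ideal I \<and> (\<forall>r\<in>I. r ^ k = 0) \<and>
     (\<forall>m<k. \<not> (\<forall>r\<in>I. r ^ m = 0))"

definition reduced_ring :: "'a::ring_1 itself \<Rightarrow> bool" where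
  "reduced_ring TYPE('a) \<longleftrightarrow> (\<forall>x::'a. \<forall>k. x ^ k = 0 \<longrightarrow> x = 0)"

definition abelian_ring :: "'a::ring_1 itself \<Rightarrow> bool" where
  "abelian_ring TYPE('a) \<longleftrightarrow> (\<forall>e::'a. idempotent e \<longrightarrow> (\<forall>x. e * x = x * e))"

text \<open>An F-algebra structure on R: a unital ring homomorphism F \<rightarrow> centre of R
  (scalar multiplication c \<cdot> r = phi c * r).\<close>
definition algebra_structure :: "('f::field \<Rightarrow> 'a::ring_1) \<Rightarrow> bool" where
  "algebra_structure phi \<longleftrightarrow>
     (\<forall>a b. phi (a + b) = phi a + phi b) \<and> (\<forall>a b. phi (a * b) = phi a * phi b) \<and>
     phi 1 = 1 \<and> (\<forall>a r. phi a * r = r * phi a)"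

end

theory Submission
  imports Defs "HOL-Computational_Algebra.Primes" "HOL-Number_Theory.Cong" "HOL-Library.FuncSet"
begin

text \<open>If \<open>r = e + u\<close> is a strongly \<open>n\<close>-torsion clean decomposition, then \<open>r\<^sup>n - 1\<close>
  vanishes on \<open>1 - e\<close> and \<open>(r - 1)\<^sup>n - 1\<close> on \<open>e\<close>; this is the identity, and at \<open>r = 3\<close> it
  makes the characteristic finite. For \<open>y\<close> in \<open>J(R)\<close>, or nilpotent, the idempotent in the
  decomposition of \<open>-y\<close> must be \<open>1\<close>, whence \<open>(1 + y)\<^sup>n = 1\<close>. The powers of such a \<open>y\<close> then
  lie in the integer span of the powers of \<open>1 + y\<close>, which has at most \<open>char(R)\<^sup>n\<close> elements,
  and a repetition \<open>y\<^sup>a = y\<^bsup>a + d\<^esup>\<close> forces \<open>y\<^sup>a = 0\<close> because \<open>1 - y\<^sup>d\<close> is invertible.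
  If \<open>n\<close> is invertible in \<open>R\<close>, \<open>(1 + y)\<^sup>n = 1\<close> already forces \<open>y = 0\<close>: this gives
  reducedness and \<open>J(R) = 0\<close> for odd \<open>n\<close> (where \<open>2 = 0\<close>), abelianness when \<open>char(F)\<close>
  does not divide \<open>n\<close>, and, after splitting off the \<open>p\<close>-part of \<open>n\<close> with the Frobenius map,
  \<open>y\<^sup>n = 0\<close> on \<open>J(R)\<close> for algebras over a field of characteristic \<open>p\<close>.\<close>

lemma left_ideal_add_closed: "left_ideal I \<Longrightarrow> x \<in> I \<Longrightarrow> y \<in> I \<Longrightarrow> x + y \<in> I"
  by (simp add: left_ideal_def)

lemma left_ideal_mult_closed: "left_ideal I \<Longrightarrow> x \<in> I \<Longrightarrow> r * x \<in> I"
  by (simp add: left_ideal_def)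

lemma left_ideal_eq_UNIV_if_one: "left_ideal I \<Longrightarrow> 1 \<in> I \<Longrightarrow> I = UNIV"
  unfolding left_ideal_def by (metis UNIV_eq_I mult.right_neutral)

lemma left_ideal_Union_chain:
  assumes "C \<noteq> {}" and ideals: "\<forall>I\<in>C. left_ideal I" and "subset.chain A C"
  shows "left_ideal (\<Union>C)"
  unfolding left_ideal_def
proof (intro conjI ballI allI)
  show "0 \<in> \<Union>C" using assms(1) ideals by (auto simp: left_ideal_def)
next
  fix x y assume "x \<in> \<Union>C" "y \<in> \<Union>C"
  then obtain I where "I \<in> C" "x \<in> I" "y \<in> I"
    using assms(3) unfolding subset.chain_def by blast
  with ideals show "x + y \<in> \<Union>C" using left_ideal_add_closed by blast
next
  fix x assume "x \<in> \<Union>C"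
  then obtain I where "I \<in> C" "x \<in> I" by blast
  then show "- x \<in> \<Union>C" using ideals unfolding left_ideal_def by blast
next
  fix r x assume "x \<in> \<Union>C"
  then obtain I where "I \<in> C" "x \<in> I" by blast
  then show "r * x \<in> \<Union>C" using ideals left_ideal_mult_closed by blast
qed

lemma exists_maximal_left_ideal:
  fixes I :: "'a::ring_1 set"
  assumes "left_ideal I" and "1 \<notin> I"
  shows "\<exists>M. maximal_left_ideal M \<and> I \<subseteq> M"
proof -
  define A where "A = {N::'a set. left_ideal N \<and> I \<subseteq> N \<and> 1 \<notin> N}"
  have "\<Union>C \<in> A" if C: "C \<noteq> {}" "subset.chain A C" for C
  proof -
    have "C \<subseteq> A" using C(2) by (simp add: subset.chain_def)
    then have "\<forall>J\<in>C. left_ideal J" by (simp add: A_def subset_eq)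
    then have "left_ideal (\<Union>C)" by (rule left_ideal_Union_chain[OF C(1) _ C(2)])
    moreover have "I \<subseteq> \<Union>C" using C(1) \<open>C \<subseteq> A\<close> unfolding A_def by blast
    moreover have "1 \<notin> \<Union>C" using \<open>C \<subseteq> A\<close> unfolding A_def by blast
    ultimately show ?thesis by (simp add: A_def)
  qed
  moreover have "I \<in> A" using assms by (simp add: A_def)
  ultimately obtain M where M: "M \<in> A" and max: "\<forall>N\<in>A. M \<subseteq> N \<longrightarrow> N = M"
    using subset_Zorn_nonempty[of A] by blast
  have "N = M \<or> N = UNIV" if N: "left_ideal N" "M \<subseteq> N" for N
  proof (cases "1 \<in> N")
    case True
    then show ?thesis using left_ideal_eq_UNIV_if_one[OF N(1)] by blast
  next
    case False
    then have "N \<in> A" using N M unfolding A_def by blast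
    then show ?thesis using max N(2) by blast
  qed
  moreover have "left_ideal M" "M \<noteq> UNIV" using M by (auto simp: A_def)
  ultimately have "maximal_left_ideal M" by (simp add: maximal_left_ideal_def)
  with M show ?thesis unfolding A_def by blast
qed

lemma left_ideal_add_multiples:
  assumes M: "left_ideal M"
  shows "left_ideal {m + s * a | m s. m \<in> M}"
  unfolding left_ideal_def
proof (intro conjI ballI allI)
  have "0 \<in> M" using M by (simp add: left_ideal_def)
  then have "0 + 0 * a \<in> {m + s * a | m s. m \<in> M}" by blast
  then show "0 \<in> {m + s * a | m s. m \<in> M}" by simp
next
  fix x y assume "x \<in> {m + s * a | m s. m \<in> M}" "y \<in> {m + s * a | m s. m \<in> M}"
  then obtain m s m' s' where xy: "x = m + s * a" "y = m' + s' * a" and "m \<in> M" "m' \<in> M"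
    by blast
  then have "m + m' \<in> M" using M by (simp add: left_ideal_def)
  then have "(m + m') + (s + s') * a \<in> {m + s * a | m s. m \<in> M}" by blast
  then show "x + y \<in> {m + s * a | m s. m \<in> M}" by (simp add: xy algebra_simps)
next
  fix x assume "x \<in> {m + s * a | m s. m \<in> M}"
  then obtain m s where x: "x = m + s * a" and "m \<in> M" by blast
  then have "- m \<in> M" using M by (simp add: left_ideal_def)
  then have "- m + (- s) * a \<in> {m + s * a | m s. m \<in> M}" by blast
  then show "- x \<in> {m + s * a | m s. m \<in> M}" by (simp add: x)
next
  fix r x assume "x \<in> {m + s * a | m s. m \<in> M}"
  then obtain m s where x: "x = m + s * a" and "m \<in> M" by blast
  then have "r * m \<in> M" using M by (simp add: left_ideal_def)
  then have "r * m + (r * s) * a \<in> {m + s * a | m s. m \<in> M}" by blast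
  then show "r * x \<in> {m + s * a | m s. m \<in> M}" by (simp add: x algebra_simps)
qed

lemma maximal_left_ideal_add_multiples:
  assumes M: "maximal_left_ideal M" and a: "a \<notin> M"
  shows "\<exists>m\<in>M. \<exists>s. b = m + s * a"
proof -
  let ?L = "{m + s * a | m s. m \<in> M}"
  have "left_ideal M" using M by (simp add: maximal_left_ideal_def)
  then have "left_ideal ?L" by (rule left_ideal_add_multiples)
  moreover have "M \<subseteq> ?L"
  proof
    fix m assume "m \<in> M"
    then have "m + 0 * a \<in> ?L" by blast
    then show "m \<in> ?L" by simp
  qed
  moreover have "?L \<noteq> M"
  proof -
    have "0 \<in> M" using \<open>left_ideal M\<close> by (simp add: left_ideal_def)
    then have "0 + 1 * a \<in> ?L" by blast
    then show ?thesis using a by auto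
  qed
  ultimately have "?L = UNIV" using M unfolding maximal_left_ideal_def by blast
  then show ?thesis by blast
qed

lemma maximal_left_ideal_colon:
  assumes M: "maximal_left_ideal M" and r: "r \<notin> M"
  shows "maximal_left_ideal {y. y * r \<in> M}"
proof -
  let ?Q = "{y. y * r \<in> M}"
  have "left_ideal M" using M by (simp add: maximal_left_ideal_def)
  then have "left_ideal ?Q"
    unfolding left_ideal_def by (auto simp: distrib_right mult.assoc)
  moreover have "?Q \<noteq> UNIV"
  proof
    assume "?Q = UNIV"
    then have "1 * r \<in> M" by blast
    with r show False by simp
  qed
  moreover have "N = ?Q \<or> N = UNIV" if N: "left_ideal N" "?Q \<subseteq> N" for N
  proof (cases "N = ?Q")
    case False
    then obtain y where y: "y \<in> N" "y * r \<notin> M" using N by blast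
    have "a \<in> N" for a
    proof -
      obtain m s where "m \<in> M" "a * r = m + s * (y * r)"
        using maximal_left_ideal_add_multiples[OF M y(2)] by blast
      then have "(a - s * y) * r \<in> M" by (simp add: algebra_simps)
      then have "a - s * y \<in> N" using N(2) by blast
      moreover have "s * y \<in> N" using left_ideal_mult_closed[OF N(1) y(1)] .
      ultimately have "(a - s * y) + s * y \<in> N" by (rule left_ideal_add_closed[OF N(1)])
      then show ?thesis by simp
    qed
    then show ?thesis by blast
  qed simp
  ultimately show ?thesis by (simp add: maximal_left_ideal_def)
qed

lemma left_ideal_jacobson: "left_ideal (jacobson TYPE('a::ring_1))"
  unfolding jacobson_def left_ideal_def maximal_left_ideal_def by auto

lemma two_sided_ideal_jacobson: "two_sided_ideal (jacobson TYPE('a::ring_1))"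
  unfolding two_sided_ideal_def
proof (intro conjI left_ideal_jacobson allI ballI)
  fix r x :: 'a assume x: "x \<in> jacobson TYPE('a)"
  have "x * r \<in> M" if M: "maximal_left_ideal M" for M
  proof (cases "r \<in> M")
    case True
    then show ?thesis using M by (simp add: maximal_left_ideal_def left_ideal_def)
  next
    case False
    then show ?thesis
      using x maximal_left_ideal_colon[OF M] by (auto simp: jacobson_def)
  qed
  then show "x * r \<in> jacobson TYPE('a)" by (simp add: jacobson_def)
qed

lemma jacobson_one_minus_left_invertible:
  assumes "x \<in> jacobson TYPE('a::ring_1)"
  shows "\<exists>v. v * (1 - x) = 1"
proof (rule ccontr)
  assume no_inverse: "\<nexists>v. v * (1 - x) = 1"
  let ?L = "{m + s * (1 - x) | m s. m \<in> {0::'a}}"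
  have "left_ideal ?L"
    by (rule left_ideal_add_multiples) (simp add: left_ideal_def)
  moreover have "1 \<notin> ?L" using no_inverse by auto
  ultimately obtain M where M: "maximal_left_ideal M" "?L \<subseteq> M"
    using exists_maximal_left_ideal by blast
  have "0 + 1 * (1 - x) \<in> ?L" by blast
  then have "1 - x \<in> M" using M(2) by auto
  moreover have "x \<in> M" using assms M(1) by (auto simp: jacobson_def)
  moreover have "left_ideal M" using M(1) by (simp add: maximal_left_ideal_def)
  ultimately have "(1 - x) + x \<in> M" using left_ideal_add_closed by blast
  then show False
    using M(1) left_ideal_eq_UNIV_if_one by (auto simp: maximal_left_ideal_def)
qed

lemma power_mult_commuting:
  fixes a b :: "'a::monoid_mult"
  assumes "a * b = b * a"
  shows "(a * b) ^ k = a ^ k * b ^ k"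
proof (induction k)
  case (Suc k)
  have "(a * b) ^ Suc k = a * (b * a ^ k) * b ^ k"
    by (simp add: Suc mult.assoc)
  also have "b * a ^ k = a ^ k * b"
    using power_commuting_commutes[OF assms] by simp
  finally show ?case by (simp add: mult.assoc)
qed simp

lemma sum_powers_mult_one_minus:
  fixes x :: "'a::ring_1"
  shows "(\<Sum>i<n. x ^ i) * (1 - x) = 1 - x ^ n"
proof (induction n)
  case (Suc n)
  have "(\<Sum>i<Suc n. x ^ i) * (1 - x) = (\<Sum>i<n. x ^ i) * (1 - x) + x ^ n * (1 - x)"
    by (simp add: distrib_right)
  also have "\<dots> = (1 - x ^ n) + (x ^ n - x ^ Suc n)"
    using Suc.IH by (simp add: right_diff_distrib power_commutes)
  finally show ?case by simp
qed simp

lemma nilpotent_one_minus_left_invertible: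
  fixes x :: "'a::ring_1"
  assumes "x ^ k = 0"
  shows "\<exists>v. v * (1 - x) = 1"
  using sum_powers_mult_one_minus[of x k] assms by auto

definition commuting_quasi_regular :: "'a::ring_1 \<Rightarrow> bool" where
  "commuting_quasi_regular y \<longleftrightarrow> (\<forall>z. z * y = y * z \<longrightarrow> (\<exists>v. v * (1 - z * y) = 1))"

lemma nilpotent_commuting_quasi_regular:
  fixes y :: "'a::ring_1"
  assumes "y ^ k = 0"
  shows "commuting_quasi_regular y"
  unfolding commuting_quasi_regular_def
proof (intro allI impI)
  fix z assume "z * y = y * z"
  then have "(z * y) ^ k = 0" using assms by (simp add: power_mult_commuting)
  then show "\<exists>v. v * (1 - z * y) = 1" by (rule nilpotent_one_minus_left_invertible)
qed

lemma jacobson_commuting_quasi_regular: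
  assumes "y \<in> jacobson TYPE('a::ring_1)"
  shows "commuting_quasi_regular y"
  unfolding commuting_quasi_regular_def
  using jacobson_one_minus_left_invertible left_ideal_mult_closed[OF left_ideal_jacobson assms]
  by blast

lemma commuting_quasi_regular_uminus:
  "commuting_quasi_regular y \<Longrightarrow> commuting_quasi_regular (- y)"
  unfolding commuting_quasi_regular_def by (metis minus_mult_commute minus_mult_left minus_mult_right)

definition strongly_torsion_clean_decomp :: "nat \<Rightarrow> 'a::ring_1 \<Rightarrow> 'a \<Rightarrow> 'a \<Rightarrow> bool" where
  "strongly_torsion_clean_decomp n r e u \<longleftrightarrow>
     idempotent e \<and> unit_of u \<and> u ^ n = 1 \<and> e * u = u * e \<and> r = e + u"

lemma has_strong_torsion_clean_decomps_iff:
  "has_strong_torsion_clean_decomps n TYPE('a::ring_1) \<longleftrightarrow>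
     (\<forall>r::'a. \<exists>e u. strongly_torsion_clean_decomp n r e u)"
  by (simp add: has_strong_torsion_clean_decomps_def strongly_torsion_clean_decomp_def)

lemma power_mult_right_cong:
  fixes a b f :: "'a::monoid_mult"
  assumes "a * f = b * f" and "b * f = f * b"
  shows "a ^ k * f = b ^ k * f"
proof (induction k)
  case (Suc k)
  have fb: "b ^ k * f = f * b ^ k" using power_commuting_commutes[OF assms(2)] by simp
  have "a ^ Suc k * f = a * f * b ^ k" using Suc fb by (simp add: mult.assoc)
  also have "\<dots> = b ^ Suc k * f" using assms(1) fb by (simp add: mult.assoc)
  finally show ?case .
qed simp

lemma strongly_torsion_clean_decomp_identity:
  fixes r :: "'a::ring_1"
  assumes "strongly_torsion_clean_decomp n r e u"
  shows "(r ^ n - 1) * ((r - 1) ^ n - 1) = 0"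
proof -
  have e: "e * e = e" "u ^ n = 1" "e * u = u * e" "r = e + u"
    using assms by (auto simp: strongly_torsion_clean_decomp_def idempotent_def)
  define f where "f = 1 - e"
  have "r ^ n * f = u ^ n * f"
    by (rule power_mult_right_cong) (simp_all add: f_def e algebra_simps)
  then have vanish_f: "(r ^ n - 1) * f = 0" by (simp add: e left_diff_distrib)
  have "(r - 1) ^ n * e = u ^ n * e"
    by (rule power_mult_right_cong) (simp_all add: e algebra_simps)
  then have vanish_e: "((r - 1) ^ n - 1) * e = 0" by (simp add: e left_diff_distrib)
  have "(r - 1) * f = f * (r - 1)" by (simp add: f_def e algebra_simps)
  then have commute_f: "((r - 1) ^ n - 1) * f = f * ((r - 1) ^ n - 1)"
    by (simp add: power_commuting_commutes left_diff_distrib right_diff_distrib)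
  have "(r ^ n - 1) * ((r - 1) ^ n - 1) = (r ^ n - 1) * (((r - 1) ^ n - 1) * (e + f))"
    by (simp add: f_def)
  also have "\<dots> = (r ^ n - 1) * f * ((r - 1) ^ n - 1)"
    by (simp add: distrib_left vanish_e commute_f mult.assoc)
  finally show ?thesis by (simp add: vanish_f)
qed

text \<open>With \<open>f = 1 - e\<close> and \<open>v = u\<inverse>\<close> one has \<open>f = (v f) y\<close>, so \<open>1 - f\<close> is left invertible and kills \<open>f\<close>.\<close>
lemma strongly_torsion_clean_decomp_idempotent_eq_one:
  fixes y :: "'a::ring_1"
  assumes dec: "strongly_torsion_clean_decomp n y e u" and y: "commuting_quasi_regular y"
  shows "e = 1"
proof -
  have e: "e * e = e" "e * u = u * e" "y = e + u" and "unit_of u"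
    using dec by (auto simp: strongly_torsion_clean_decomp_def idempotent_def)
  then obtain v where v: "u * v = 1" "v * u = 1" by (auto simp: unit_of_def)
  have "v * e = v * e * (u * v)" using v by simp
  also have "\<dots> = v * (e * u) * v" by (simp add: mult.assoc)
  also have "\<dots> = (v * u) * e * v" by (simp add: e(2) mult.assoc)
  finally have ve: "v * e = e * v" using v by simp
  have vy: "v * y = y * v" using v ve by (simp add: e(3) algebra_simps)
  define f where "f = 1 - e"
  have ff: "f * f = f" and fy: "f * y = u * f" and f_comm: "f * y = y * f"
    by (simp_all add: f_def e algebra_simps)
  have f_eq: "(v * f) * y = f"
  proof -
    have "(v * f) * y = (v * u) * f" by (simp add: fy mult.assoc)
    then show ?thesis using v by simp
  qed
  have "(v * f) * y = y * (v * f)"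
    using vy f_comm by (metis mult.assoc)
  with y obtain w where "w * (1 - (v * f) * y) = 1"
    by (auto simp: commuting_quasi_regular_def)
  then have "f = w * (1 - f) * f" by (simp add: f_eq)
  also have "\<dots> = 0" by (simp add: mult.assoc left_diff_distrib ff)
  finally show ?thesis by (simp add: f_def)
qed

lemma one_plus_power_eq_one:
  fixes y :: "'a::ring_1"
  assumes "has_strong_torsion_clean_decomps n TYPE('a)" and "commuting_quasi_regular y"
  shows "(1 + y) ^ n = 1"
proof -
  have power_minus_one: "(x - 1) ^ n = 1" if "commuting_quasi_regular x" for x :: 'a
  proof -
    obtain e u where "strongly_torsion_clean_decomp n x e u"
      using assms(1) unfolding has_strong_torsion_clean_decomps_iff by blast
    moreover from this that have "e = 1" by (rule strongly_torsion_clean_decomp_idempotent_eq_one)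
    ultimately show ?thesis by (simp add: strongly_torsion_clean_decomp_def)
  qed
  have "(- 1 :: 'a) ^ n = 1"
    using power_minus_one[of 0] nilpotent_commuting_quasi_regular[of "0::'a" 1] by simp
  moreover have "(- y - 1) ^ n = 1"
    using power_minus_one commuting_quasi_regular_uminus assms(2) by blast
  moreover have "(1 + y) ^ n = (- 1) ^ n * (- y - 1) ^ n"
    using power_minus[of "- y - 1" n] by simp
  ultimately show ?thesis by simp
qed

lemma sum_powers_one_plus:
  fixes y :: "'a::ring_1"
  shows "(\<Sum>i<n. (1 + y) ^ i) = of_nat n + (\<Sum>i<n. \<Sum>l<i. (1 + y) ^ l) * y"
proof -
  have power_eq: "(1 + y) ^ i = 1 + (\<Sum>l<i. (1 + y) ^ l) * y" for i
  proof -
    have "- ((\<Sum>l<i. (1 + y) ^ l) * y) = 1 - (1 + y) ^ i"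
      using sum_powers_mult_one_minus[of "1 + y" i] by simp
    then have "(1 + y) ^ i - 1 = (\<Sum>l<i. (1 + y) ^ l) * y"
      by (simp add: minus_equation_iff[of "(\<Sum>l<i. (1 + y) ^ l) * y"])
    then show ?thesis by (metis diff_eq_eq add.commute)
  qed
  have "(\<Sum>i<n. (1 + y) ^ i) = (\<Sum>i<n. 1 + (\<Sum>l<i. (1 + y) ^ l) * y)"
    by (intro sum.cong refl power_eq)
  then show ?thesis by (simp add: sum.distrib sum_distrib_right)
qed

text \<open>If \<open>(1 + y)\<^sup>n = 1\<close> then \<open>y\<close> annihilates \<open>\<Sum>i<n. (1 + y)\<^sup>i\<close>, which is
  \<open>n\<close> modulo a multiple of \<open>y\<close>; when \<open>n\<close> is invertible, quasi-regularity makes this sum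
  left invertible.\<close>
lemma torsion_one_plus_eq_zero:
  fixes y :: "'a::ring_1"
  assumes torsion: "(1 + y) ^ n = 1" and inverse: "of_int c * of_nat n = (1::'a)"
    and y: "commuting_quasi_regular y"
  shows "y = 0"
proof -
  define W where "W = (\<Sum>i<n. \<Sum>l<i. (1 + y) ^ l)"
  define G where "G = (\<Sum>i<n. (1 + y) ^ i)"
  have "G * y = 0"
    using sum_powers_mult_one_minus[of "1 + y" n] torsion by (simp add: G_def)
  have "(1 + y) ^ l * y = y * (1 + y) ^ l" for l
    by (rule power_commuting_commutes) (simp add: distrib_left distrib_right)
  then have W_comm: "W * y = y * W"
    by (simp add: W_def sum_distrib_left sum_distrib_right)
  have "G = of_nat n + W * y" unfolding G_def W_def by (rule sum_powers_one_plus)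
  then have "of_int c * G = 1 - (- (of_int c * W)) * y"
    using inverse by (simp add: distrib_left mult.assoc)
  moreover have "(- (of_int c * W)) * y = y * (- (of_int c * W))"
    using W_comm by (simp add: mult.assoc) (metis mult.assoc mult_of_int_commute)
  ultimately obtain v where "v * (of_int c * G) = 1"
    using y unfolding commuting_quasi_regular_def by metis
  then have "y = v * of_int c * (G * y)" by (metis mult.assoc mult_1)
  with \<open>G * y = 0\<close> show ?thesis by simp
qed

lemma of_int_mod_CHAR: "(of_int (k mod int CHAR('a)) :: 'a::ring_1) = of_int k"
  by (simp add: of_int_eq_iff_cong_CHAR cong_def)

definition int_span_powers :: "nat \<Rightarrow> 'a::ring_1 \<Rightarrow> 'a set" where
  "int_span_powers n t = range (\<lambda>c :: nat \<Rightarrow> int. \<Sum>i<n. of_int (c i) * t ^ i)"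

lemma int_span_powers_zero: "0 \<in> int_span_powers n t"
  unfolding int_span_powers_def by (rule range_eqI[where x = "\<lambda>_. 0"]) simp

lemma int_span_powers_add:
  assumes "a \<in> int_span_powers n t" and "b \<in> int_span_powers n t"
  shows "a + b \<in> int_span_powers n t"
proof -
  obtain c d where "a = (\<Sum>i<n. of_int (c i) * t ^ i)" "b = (\<Sum>i<n. of_int (d i) * t ^ i)"
    using assms by (auto simp: int_span_powers_def)
  then have "a + b = (\<Sum>i<n. of_int (c i + d i) * t ^ i)"
    by (simp add: sum.distrib distrib_right)
  then show ?thesis unfolding int_span_powers_def by (rule range_eqI[where x = "\<lambda>i. c i + d i"])
qed

lemma int_span_powers_of_int_mult:
  assumes "a \<in> int_span_powers n t"
  shows "of_int z * a \<in> int_span_powers n t"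
proof -
  obtain c where "a = (\<Sum>i<n. of_int (c i) * t ^ i)"
    using assms by (auto simp: int_span_powers_def)
  then have "of_int z * a = (\<Sum>i<n. of_int (z * c i) * t ^ i)"
    by (simp add: sum_distrib_left mult.assoc)
  then show ?thesis unfolding int_span_powers_def by (rule range_eqI[where x = "\<lambda>i. z * c i"])
qed

lemma int_span_powers_sum:
  "(\<And>i. i \<in> A \<Longrightarrow> g i \<in> int_span_powers n t) \<Longrightarrow> sum g A \<in> int_span_powers n t"
  by (induction A rule: infinite_finite_induct) (simp_all add: int_span_powers_zero int_span_powers_add)

lemma power_in_int_span_powers:
  assumes "t ^ n = 1" and "0 < n"
  shows "t ^ m \<in> int_span_powers n t"
proof -
  have "t ^ m = (t ^ n) ^ (m div n) * t ^ (m mod n)"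
    by (simp add: power_mult[symmetric] power_add[symmetric])
  also have "\<dots> = (\<Sum>i<n. if i = m mod n then t ^ i else 0)"
    using assms by (simp add: sum.delta')
  also have "\<dots> = (\<Sum>i<n. of_int (if i = m mod n then 1 else 0) * t ^ i)"
    by (intro sum.cong) auto
  finally show ?thesis
    unfolding int_span_powers_def by (rule range_eqI[where x = "\<lambda>i. if i = m mod n then 1 else 0"])
qed

lemma mult_in_int_span_powers:
  assumes "t ^ n = 1" and "0 < n" and "a \<in> int_span_powers n t"
  shows "t * a \<in> int_span_powers n t"
proof -
  obtain c where "a = (\<Sum>i<n. of_int (c i) * t ^ i)"
    using assms(3) by (auto simp: int_span_powers_def)
  moreover have "t * (of_int k * t ^ i) = of_int k * t ^ Suc i" for k i
    by (metis mult.assoc mult_of_int_commute power_Suc)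
  ultimately have "t * a = (\<Sum>i<n. of_int (c i) * t ^ Suc i)"
    by (simp add: sum_distrib_left)
  also have "\<dots> \<in> int_span_powers n t"
    using assms(1,2) by (intro int_span_powers_sum int_span_powers_of_int_mult power_in_int_span_powers)
  finally show ?thesis .
qed

lemma finite_card_int_span_powers:
  assumes "CHAR('a::ring_1) > 0"
  shows "finite (int_span_powers n (t::'a)) \<and> card (int_span_powers n t) \<le> CHAR('a) ^ n"
proof -
  let ?F = "\<lambda>c :: nat \<Rightarrow> int. \<Sum>i<n. of_int (c i) * t ^ i"
  let ?P = "PiE {..<n} (\<lambda>_. {0..<int CHAR('a)})"
  have "int_span_powers n t \<subseteq> ?F ` ?P"
  proof
    fix a assume "a \<in> int_span_powers n t"
    then obtain c where a: "a = ?F c" by (auto simp: int_span_powers_def)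
    define c' where "c' = restrict (\<lambda>i. c i mod int CHAR('a)) {..<n}"
    have "?F c' = ?F c"
      by (intro sum.cong refl) (simp add: c'_def of_int_mod_CHAR)
    then have "a = ?F c'" using a by simp
    moreover have "c' \<in> ?P" using assms by (simp add: c'_def restrict_PiE_iff)
    ultimately show "a \<in> ?F ` ?P" by (rule image_eqI)
  qed
  moreover have "finite ?P" by (simp add: finite_PiE)
  ultimately have "finite (int_span_powers n t)" by (meson finite_imageI finite_subset)
  have "card (int_span_powers n t) \<le> card (?F ` ?P)"
    by (rule card_mono) (use \<open>finite ?P\<close> \<open>int_span_powers n t \<subseteq> ?F ` ?P\<close> in auto)
  also have "\<dots> \<le> card ?P" using \<open>finite ?P\<close> by (rule card_image_le)
  also have "\<dots> = CHAR('a) ^ n" by (simp add: card_PiE)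
  finally show ?thesis using \<open>finite (int_span_powers n t)\<close> by simp
qed

lemma power_in_int_span_powers_one_plus:
  fixes y :: "'a::ring_1"
  assumes "(1 + y) ^ n = 1" and "0 < n"
  shows "y ^ k \<in> int_span_powers n (1 + y)"
proof (induction k)
  case 0
  then show ?case using power_in_int_span_powers[OF assms, of 0] by simp
next
  case (Suc k)
  have "y ^ Suc k = (1 + y) * y ^ k + of_int (- 1) * y ^ k"
    by (simp add: distrib_right)
  then show ?case
    using Suc assms by (simp only: int_span_powers_add int_span_powers_of_int_mult mult_in_int_span_powers)
qed

lemma powers_repeat_within_card:
  fixes y :: "'a::monoid_mult"
  assumes "finite S" and "\<And>k. y ^ k \<in> S"
  shows "\<exists>a b. a < b \<and> b \<le> card S \<and> y ^ a = y ^ b"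
proof -
  have "(\<lambda>k. y ^ k) ` {0..card S} \<subseteq> S" using assms(2) by blast
  then have "card ((\<lambda>k. y ^ k) ` {0..card S}) < card {0..card S}"
    using card_mono[OF assms(1)] by (metis card_atLeastAtMost diff_zero le_imp_less_Suc)
  then obtain a b where "a \<in> {0..card S}" "b \<in> {0..card S}" "a \<noteq> b" "y ^ a = y ^ b"
    using pigeonhole unfolding inj_on_def by blast
  then show ?thesis by (metis atLeastAtMost_iff linorder_neqE_nat)
qed

lemma power_eq_zero_if_power_repeats:
  fixes y :: "'a::ring_1"
  assumes "y ^ a = y ^ (a + d)" and "\<exists>v. v * (1 - y ^ d) = 1"
  shows "y ^ a = 0"
proof -
  obtain v where v: "v * (1 - y ^ d) = 1" using assms(2) by blast
  have "y ^ d * y ^ a = y ^ (a + d)" by (metis add.commute power_add)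
  then have "(1 - y ^ d) * y ^ a = 0" using assms(1) by (simp add: left_diff_distrib)
  then have "v * ((1 - y ^ d) * y ^ a) = 0" by simp
  then show ?thesis by (simp add: v mult.assoc[symmetric])
qed

lemma jacobson_power_CHAR_eq_zero:
  fixes y :: "'a::ring_1"
  assumes "has_strong_torsion_clean_decomps n TYPE('a)" and "0 < n" and "CHAR('a) > 0"
    and y: "y \<in> jacobson TYPE('a)"
  shows "y ^ (CHAR('a) ^ n - 1) = 0"
proof -
  have "(1 + y) ^ n = 1"
    using one_plus_power_eq_one[OF assms(1) jacobson_commuting_quasi_regular[OF y]] .
  then have "y ^ k \<in> int_span_powers n (1 + y)" for k
    using assms(2) by (rule power_in_int_span_powers_one_plus)
  moreover have "finite (int_span_powers n (1 + y))"
    and "card (int_span_powers n (1 + y)) \<le> CHAR('a) ^ n"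
    using finite_card_int_span_powers[OF assms(3)] by blast+
  ultimately obtain a b where ab: "a < b" "b \<le> CHAR('a) ^ n" "y ^ a = y ^ b"
    using powers_repeat_within_card by (metis le_trans)
  have "y ^ (b - a) \<in> jacobson TYPE('a)"
    using left_ideal_mult_closed[OF left_ideal_jacobson y, of "y ^ (b - a - 1)"]
      power_minus_mult[of "b - a" y] ab(1) by simp
  moreover have "y ^ a = y ^ (a + (b - a))" using ab by simp
  ultimately have "y ^ a = 0"
    using power_eq_zero_if_power_repeats jacobson_one_minus_left_invertible by blast
  moreover have "CHAR('a) ^ n - 1 = a + (CHAR('a) ^ n - 1 - a)" using ab by linarith
  then have "y ^ (CHAR('a) ^ n - 1) = y ^ a * y ^ (CHAR('a) ^ n - 1 - a)"
    by (metis power_add)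
  ultimately show ?thesis by simp
qed

lemma card_range_of_int:
  assumes "CHAR('a::ring_1) > 0"
  shows "finite (range (of_int :: int \<Rightarrow> 'a)) \<and> card (range (of_int :: int \<Rightarrow> 'a)) = CHAR('a)"
proof -
  let ?C = "int CHAR('a)"
  have "range (of_int :: int \<Rightarrow> 'a) = of_int ` {0..<?C}"
  proof (intro equalityI subsetI)
    fix z assume "z \<in> range (of_int :: int \<Rightarrow> 'a)"
    then obtain k where "z = of_int (k mod ?C)" by (auto simp: of_int_mod_CHAR)
    moreover have "k mod ?C \<in> {0..<?C}" using assms by simp
    ultimately show "z \<in> of_int ` {0..<?C}" by blast
  qed auto
  moreover have "inj_on (of_int :: int \<Rightarrow> 'a) {0..<?C}"
    by (auto simp: inj_on_def of_int_eq_iff_cong_CHAR cong_def)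
  ultimately show ?thesis by (simp add: card_image)
qed

lemma ring_char_eq_CHAR: "CHAR('a::ring_1) > 0 \<Longrightarrow> ring_char TYPE('a) = CHAR('a)"
  using card_range_of_int[where 'a = 'a] by (simp add: ring_char_def)

lemma strongly_torsion_clean_identity:
  fixes r :: "'a::ring_1"
  assumes "has_strong_torsion_clean_decomps n TYPE('a)"
  shows "(r ^ n - 1) * ((r - 1) ^ n - 1) = 0"
  using assms strongly_torsion_clean_decomp_identity
  unfolding has_strong_torsion_clean_decomps_iff by blast

lemma CHAR_pos_if_strong_torsion_clean:
  assumes "has_strong_torsion_clean_decomps n TYPE('a::ring_1)" and "0 < n"
  shows "CHAR('a) > 0"
proof -
  define N where "N = (3 ^ n - 1) * (2 ^ n - 1 :: nat)"
  have "((3::'a) ^ n - 1) * ((3 - 1) ^ n - 1) = 0"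
    using strongly_torsion_clean_identity[OF assms(1)] .
  then have "(of_nat N :: 'a) = 0" by (simp add: N_def of_nat_diff)
  moreover have "N > 0"
    using one_less_power[of "3::nat" n] one_less_power[of "2::nat" n] assms(2) by (simp add: N_def)
  ultimately show ?thesis by (auto simp: CHAR_pos_iff)
qed

lemma nil_ideal_of_index_exists:
  assumes "two_sided_ideal I" and "\<forall>r\<in>I. r ^ N = 0"
  shows "\<exists>k. nil_ideal_of_index I k \<and> k \<le> N"
proof -
  let ?nil = "\<lambda>k. \<forall>r\<in>I. r ^ k = 0"
  have "?nil (LEAST k. ?nil k)" and "(LEAST k. ?nil k) \<le> N"
    using LeastI[of ?nil N] Least_le[of ?nil N] assms(2) by blast+
  moreover have "\<forall>m < (LEAST k. ?nil k). \<not> ?nil m" using not_less_Least by blast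
  ultimately show ?thesis using assms(1) unfolding nil_ideal_of_index_def by blast
qed

lemma jacobson_nil_index_lt:
  assumes "has_strong_torsion_clean_decomps n TYPE('a::ring_1)" and "0 < n"
  shows "\<exists>k. nil_ideal_of_index (jacobson TYPE('a)) k \<and> k < ring_char TYPE('a) ^ n"
proof -
  have pos: "CHAR('a) > 0" using CHAR_pos_if_strong_torsion_clean[OF assms] .
  then obtain k where "nil_ideal_of_index (jacobson TYPE('a)) k" "k \<le> CHAR('a) ^ n - 1"
    using nil_ideal_of_index_exists[OF two_sided_ideal_jacobson]
      jacobson_power_CHAR_eq_zero[OF assms pos] by blast
  moreover have "CHAR('a) ^ n > 0" using pos by simp
  ultimately show ?thesis using ring_char_eq_CHAR[OF pos] by (metis Suc_pred' less_Suc_eq_le)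
qed

lemma commuting_quasi_regular_eq_zero:
  fixes y :: "'a::ring_1"
  assumes "has_strong_torsion_clean_decomps n TYPE('a)" and "of_int c * of_nat n = (1::'a)"
    and "commuting_quasi_regular y"
  shows "y = 0"
  using torsion_one_plus_eq_zero one_plus_power_eq_one assms by blast

lemma strongly_torsion_clean_odd:
  assumes decomps: "has_strong_torsion_clean_decomps n TYPE('a::ring_1)" and "odd n"
  shows "reduced_ring TYPE('a) \<and> ring_char TYPE('a) = 2 \<and> jacobson TYPE('a) = {0}"
proof -
  have "((0::'a) ^ n - 1) * ((0 - 1) ^ n - 1) = 0"
    using strongly_torsion_clean_identity[OF decomps] .
  then have two: "(2::'a) = 0" using \<open>odd n\<close> by (simp add: zero_power odd_pos)
  then have "(of_nat 2 :: 'a) = 0" by simp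
  then have "CHAR('a) dvd 2" by (simp only: of_nat_eq_0_iff_char_dvd)
  then have "CHAR('a) \<le> 2" and "CHAR('a) \<noteq> 0" by (auto dest: dvd_imp_le intro: Nat.gr0I)
  then have CHAR: "CHAR('a) = 2" using CHAR_not_1[where 'a = 'a] by linarith
  obtain q where "n = 2 * q + 1" using \<open>odd n\<close> oddE by blast
  then have inverse: "of_int 1 * of_nat n = (1::'a)" using two by simp
  have "reduced_ring TYPE('a)"
    unfolding reduced_ring_def
    using commuting_quasi_regular_eq_zero[OF decomps inverse] nilpotent_commuting_quasi_regular by blast
  moreover have "jacobson TYPE('a) = {0}"
    using commuting_quasi_regular_eq_zero[OF decomps inverse] jacobson_commuting_quasi_regular
      left_ideal_jacobson by (fastforce simp: left_ideal_def)
  ultimately show ?thesis using CHAR ring_char_eq_CHAR[where 'a = 'a] by simp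
qed

lemma algebra_structure_of_int:
  fixes phi :: "'f::field \<Rightarrow> 'a::ring_1"
  assumes "algebra_structure phi"
  shows "phi (of_int k) = of_int k"
proof -
  have add: "phi (a + b) = phi a + phi b" for a b
    using assms unfolding algebra_structure_def by blast
  have "phi 1 = 1" using assms unfolding algebra_structure_def by blast
  have "phi 0 = 0" using add[of 0 0] by simp
  then have minus: "phi (- a) = - phi a" for a
    using add[of a "- a"] by (simp add: neg_eq_iff_add_eq_0[symmetric])
  have "phi (of_nat m) = of_nat m" for m
    using \<open>phi 0 = 0\<close> \<open>phi 1 = 1\<close> by (induction m) (simp_all add: add)
  then show ?thesis by (cases k rule: int_cases2) (simp_all add: minus)
qed

lemma CHAR_eq_if_algebra_structure:
  fixes phi :: "'f::field \<Rightarrow> 'a::ring_1"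
  assumes "algebra_structure phi"
  shows "CHAR('f) = CHAR('a)"
proof -
  have phi_eq_0_iff: "phi a = 0 \<longleftrightarrow> a = 0" for a
  proof
    assume "phi a = 0"
    show "a = 0"
    proof (rule ccontr)
      assume "a \<noteq> 0"
      moreover have "phi (a * inverse a) = phi a * phi (inverse a)" and "phi 1 = 1"
        using assms unfolding algebra_structure_def by blast+
      ultimately show False using \<open>phi a = 0\<close> by simp
    qed
  qed (use algebra_structure_of_int[OF assms, of 0] in simp)
  have iff: "(of_nat m :: 'f) = 0 \<longleftrightarrow> (of_nat m :: 'a) = 0" for m
    using phi_eq_0_iff[of "of_nat m"] algebra_structure_of_int[OF assms, of "int m"] by simp
  show ?thesis
  proof (rule dvd_antisym)
    show "CHAR('f) dvd CHAR('a)" using iff[of "CHAR('a)"] by (simp add: of_nat_eq_0_iff_char_dvd)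
    show "CHAR('a) dvd CHAR('f)" using iff[of "CHAR('f)"] by (simp add: of_nat_eq_0_iff_char_dvd)
  qed
qed

lemma of_nat_invertible_if_coprime_CHAR:
  assumes "coprime CHAR('a::ring_1) m"
  shows "\<exists>c. of_int c * of_nat m = (1::'a)"
proof -
  obtain u v :: int where "u * int CHAR('a) + v * int m = 1"
    using assms bezout_int[of "int CHAR('a)" "int m"] by (auto simp: coprime_int_iff)
  then have "(of_int (u * int CHAR('a) + v * int m) :: 'a) = 1" by simp
  then show ?thesis by auto
qed

lemma one_plus_power_binomial:
  fixes x :: "'a::ring_1"
  shows "(1 + x) ^ k = (\<Sum>i\<le>k. of_nat (k choose i) * x ^ i)"
proof (induction k)
  case (Suc k)
  have "(1 + x) ^ Suc k = (1 + x) ^ k + (1 + x) ^ k * x"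
    by (simp only: power_Suc2 distrib_left mult_1_right)
  also have "(1 + x) ^ k * x = (\<Sum>i\<le>k. of_nat (k choose i) * x ^ Suc i)"
    using Suc by (simp add: sum_distrib_right mult.assoc power_commutes)
  also have "(1 + x) ^ k = 1 + (\<Sum>i<k. of_nat (k choose Suc i) * x ^ Suc i)"
    using Suc by (simp add: sum.atMost_shift)
  also have "(\<Sum>i\<le>Suc k. of_nat (Suc k choose i) * x ^ i)
     = 1 + (\<Sum>i\<le>k. of_nat (k choose i) * x ^ Suc i) + (\<Sum>i\<le>k. of_nat (k choose Suc i) * x ^ Suc i)"
    by (simp add: sum.atMost_Suc_shift sum.distrib distrib_right del: sum.atMost_Suc)
  moreover have "(\<Sum>i\<le>k. of_nat (k choose Suc i) * x ^ Suc i) = (\<Sum>i<k. of_nat (k choose Suc i) * x ^ Suc i)"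
    by (simp add: lessThan_Suc_atMost[symmetric] binomial_eq_0)
  ultimately show ?case by (simp add: algebra_simps)
qed simp

lemma one_plus_power_prime:
  fixes x :: "'a::ring_1"
  assumes p: "prime p" and "of_nat p = (0::'a)"
  shows "(1 + x) ^ p = 1 + x ^ p"
proof -
  have "(1 + x) ^ p = (\<Sum>i\<in>{0, p}. of_nat (p choose i) * x ^ i)"
    unfolding one_plus_power_binomial
  proof (rule sum.mono_neutral_right)
    show "\<forall>i\<in>{..p} - {0, p}. of_nat (p choose i) * x ^ i = 0"
    proof
      fix i assume "i \<in> {..p} - {0, p}"
      then have "p dvd (p choose i)" using p by (intro dvd_choose_prime) auto
      then show "of_nat (p choose i) * x ^ i = 0" using assms(2) by auto
    qed
  qed auto
  then show ?thesis using p by (simp add: prime_gt_0_nat)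
qed

lemma one_plus_power_prime_power:
  fixes x :: "'a::ring_1"
  assumes "prime p" and "of_nat p = (0::'a)"
  shows "(1 + x) ^ (p ^ a) = 1 + x ^ (p ^ a)"
proof (induction a)
  case (Suc a)
  have "(1 + x) ^ (p ^ Suc a) = ((1 + x) ^ (p ^ a)) ^ p"
    by (simp only: power_Suc2 power_mult)
  also have "\<dots> = 1 + (x ^ (p ^ a)) ^ p"
    by (simp only: Suc.IH one_plus_power_prime[OF assms])
  also have "\<dots> = 1 + x ^ (p ^ Suc a)"
    by (simp only: power_Suc2 power_mult)
  finally show ?case .
qed simp

lemma jacobson_power_eq_zero_prime_CHAR:
  fixes y :: "'a::ring_1"
  assumes decomps: "has_strong_torsion_clean_decomps n TYPE('a)" and "0 < n"
    and p: "prime CHAR('a)" and y: "y \<in> jacobson TYPE('a)"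
  shows "y ^ n = 0"
proof -
  let ?p = "CHAR('a)"
  obtain m where n: "n = ?p ^ multiplicity ?p n * m" and "\<not> ?p dvd m"
    using multiplicity_decompose'[of n ?p] \<open>0 < n\<close> p by (auto simp: not_prime_unit)
  define q where "q = ?p ^ multiplicity ?p n"
  obtain c where inverse: "of_int c * of_nat m = (1::'a)"
    using of_nat_invertible_if_coprime_CHAR \<open>\<not> ?p dvd m\<close> p prime_imp_coprime by blast
  have "y ^ q \<in> jacobson TYPE('a)"
    using left_ideal_mult_closed[OF left_ideal_jacobson y, of "y ^ (q - 1)"]
      power_minus_mult[of q y] p by (simp add: q_def prime_gt_0_nat)
  moreover have "(1 + y ^ q) ^ m = 1"
  proof -
    have frobenius: "(1 + y) ^ q = 1 + y ^ q"
      unfolding q_def by (rule one_plus_power_prime_power[OF p of_nat_CHAR])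
    have "n = q * m" using n by (simp add: q_def)
    then have "(1 + y ^ q) ^ m = (1 + y) ^ n" by (simp add: power_mult frobenius)
    then show ?thesis
      using one_plus_power_eq_one[OF decomps jacobson_commuting_quasi_regular[OF y]] by simp
  qed
  ultimately have "y ^ q = 0"
    using torsion_one_plus_eq_zero inverse jacobson_commuting_quasi_regular by blast
  moreover have "q \<le> n"
    using n \<open>0 < n\<close> by (metis q_def dvd_imp_le dvd_triv_left)
  ultimately show ?thesis by (metis le_add_diff_inverse mult_zero_left power_add)
qed

lemma abelian_if_no_square_zero:
  assumes "\<forall>x::'a::ring_1. x * x = 0 \<longrightarrow> x = 0"
  shows "abelian_ring TYPE('a)"
  unfolding abelian_ring_def idempotent_def
proof (intro allI impI)
  fix e x :: 'a assume "e * e = e"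
  then have orth: "(1 - e) * e = 0" "e * (1 - e) = 0" by (simp_all add: algebra_simps)
  have "(e * x * (1 - e)) * (e * x * (1 - e)) = e * x * ((1 - e) * e) * x * (1 - e)"
    by (simp add: mult.assoc)
  also have "\<dots> = 0" using orth by simp
  finally have "e * x * (1 - e) = 0" using assms by blast
  then have left: "e * x = e * x * e" by (simp add: right_diff_distrib)
  have "((1 - e) * x * e) * ((1 - e) * x * e) = (1 - e) * x * (e * (1 - e)) * x * e"
    by (simp add: mult.assoc)
  also have "\<dots> = 0" using orth by simp
  finally have "(1 - e) * x * e = 0" using assms by blast
  then have right: "x * e = e * x * e" by (simp add: left_diff_distrib)
  show "e * x = x * e" using left right by simp
qed

lemma strongly_torsion_clean_algebra:
  fixes phi :: "'f::field \<Rightarrow> 'a::ring_1"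
  assumes decomps: "has_strong_torsion_clean_decomps n TYPE('a)" and "0 < n"
    and phi: "algebra_structure phi"
  shows "(\<exists>k. nil_ideal_of_index (jacobson TYPE('a)) k \<and> k \<le> n)
    \<and> (abelian_ring TYPE('a) \<or> ring_char TYPE('f) dvd n)"
proof -
  have pos: "CHAR('f) > 0"
    using CHAR_pos_if_strong_torsion_clean[OF assms(1,2)] CHAR_eq_if_algebra_structure[OF phi] by simp
  then have p: "prime CHAR('a)"
    using prime_CHAR_semidom CHAR_eq_if_algebra_structure[OF phi] by metis
  have "\<exists>k. nil_ideal_of_index (jacobson TYPE('a)) k \<and> k \<le> n"
    using nil_ideal_of_index_exists[OF two_sided_ideal_jacobson]
      jacobson_power_eq_zero_prime_CHAR[OF assms(1,2) p] by blast
  moreover have "abelian_ring TYPE('a) \<or> ring_char TYPE('f) dvd n"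
  proof (cases "CHAR('a) dvd n")
    case True
    then show ?thesis
      using ring_char_eq_CHAR[OF pos] CHAR_eq_if_algebra_structure[OF phi] by simp
  next
    case False
    then obtain c where "of_int c * of_nat n = (1::'a)"
      using of_nat_invertible_if_coprime_CHAR p prime_imp_coprime by blast
    then have "x = 0" if "x * x = 0" for x :: 'a
      using commuting_quasi_regular_eq_zero[OF decomps] nilpotent_commuting_quasi_regular[of x 2] that
      by (simp add: power2_eq_square)
    then show ?thesis using abelian_if_no_square_zero by blast
  qed
  ultimately show ?thesis by blast
qed

theorem theorem2p4:
  fixes n :: nat
  assumes "strongly_n_torsion_clean n TYPE('a::ring_1)"
  shows "(\<forall>r::'a. (r ^ n - 1) * ((r - 1) ^ n - 1) = 0)
    \<and> finite (range (of_int :: int \<Rightarrow> 'a))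
    \<and> (\<exists>k. nil_ideal_of_index (jacobson TYPE('a)) k \<and> k < ring_char TYPE('a) ^ n)
    \<and> (odd n \<longrightarrow> reduced_ring TYPE('a) \<and> ring_char TYPE('a) = 2 \<and> jacobson TYPE('a) = {0})
    \<and> (\<forall>phi :: 'f::field \<Rightarrow> 'a. algebra_structure phi \<longrightarrow>
         (\<exists>k. nil_ideal_of_index (jacobson TYPE('a)) k \<and> k \<le> n)
         \<and> (abelian_ring TYPE('a) \<or> ring_char TYPE('f) dvd n))"
proof -
  have decomps: "has_strong_torsion_clean_decomps n TYPE('a)" and "0 < n"
    using assms by (auto simp: strongly_n_torsion_clean_def)
  then show ?thesis
    using strongly_torsion_clean_identity[OF decomps]
      card_range_of_int[OF CHAR_pos_if_strong_torsion_clean[OF decomps \<open>0 < n\<close>]]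
      jacobson_nil_index_lt[OF decomps \<open>0 < n\<close>]
      strongly_torsion_clean_odd[OF decomps]
      strongly_torsion_clean_algebra[OF decomps \<open>0 < n\<close>]
    by blast
qed

end
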